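(* Let $q\ge5$. The imaginary chords of the twisted cubic $\mathcal{C}$ form one orbit under $G_q$, and the subgroup of $G_q$ fixing an imaginary chord has size $2(q+1)$. For $q$ odd, let $\rho$ be a non-square in $\mathbb{F}_q$; the line $\ell_1$ through $P(1,0,\rho,0)$ and $P(0,1,0,\rho)$ is an imaginary chord, and every element of the subgroup of $G_q$ fixing $\ell_1$ has a matrix of the form $\begin{pmatrix}\alpha d^3&\alpha\rho bd^2&\alpha\rho^2b^2d&\alpha\rho^3b^3\\ 3bd^2&d^3+2\rho b^2d&\rho^2b^3+2\rho bd^2&3\rho^2b^2d\\ 3\alpha b^2d&\alpha\rho b^3+2\alpha bd^2&\alpha d^3+2\alpha\rho b^2d&3\alpha\rho bd^2\\ b^3&b^2d&bd^2&d^3\end{pmatrix}$, with $\alpha\in\{-1,1\}$ and $b,d\in\mathbb{F}_q$ not both $0$. For $q$ even, let $\eta\in\mathbb{F}_q$ have absolute trace $1$; the line $\ell_2$ through $P(\eta+1,1,1,0)$ and $P(\eta,\eta,0,1)$ is an imaginary chord, and every element of the subgroup of $G_q$ fixing $\ell_2$ has a matrix of the form $\begin{pmatrix}A^3&cA^2&c^2A&c^3\\ A^2B&dA^2&c^2B&c^2d\\ AB^2&cB^2&Ad^2&cd^2\\ B^3&dB^2&d^2B&d^3\end{pmatrix}$, where $A=\alpha c+d$, $B=\eta c+(\alpha+1)d$, $\alpha\in\{0,1\}$, and $c,d\in\mathbb{F}_q$ not both $0$.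
   Context: $\mathrm{PG}(3,q)$ has points $P(x_0,x_1,x_2,x_3)$. For $t\in\mathbb{F}_{q^2}$ let $P_t=P(t^3,t^2,t,1)$, and $P_\infty=P(1,0,0,0)$; the twisted cubic is $\mathcal{C}=\{P_t:t\in\mathbb{F}_q\cup\{\infty\}\}$. An imaginary chord is a line of $\mathrm{PG}(3,q)$ which, extended to $\mathrm{PG}(3,q^2)$, passes through $P_t$ and $P_{t^q}$ for some $t\in\mathbb{F}_{q^2}\setminus\mathbb{F}_q$. $G_q$ is the group of projectivities of $\mathrm{PG}(3,q)$ mapping $\mathcal{C}$ to itself; for $q\ge5$ its elements are the maps $x\mapsto xM$ on row coordinate vectors, with $M=\begin{pmatrix} a^3&a^2c&ac^2&c^3\\ 3a^2b&a^2d+2abc&bc^2+2acd&3c^2d\\ 3ab^2&b^2c+2abd&ad^2+2bcd&3cd^2\\ b^3&b^2d&bd^2&d^3\end{pmatrix}$, $a,b,c,d\in\mathbb{F}_q$, $ad-bc\neq0$, up to a nonzero scalar. For $q=2^h$, the absolute trace of $\eta$ is $\eta+\eta^2+\eta^{4}+\dots+\eta^{2^{h-1}}$. *)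

theory Defs
  imports "HOL-Analysis.Finite_Cartesian_Product"
begin

text \<open>Coordinates of PG(3,q): vectors in 'a^4 (indices 0,1,2,3 of the numeral type 4).
  Row vector x times matrix M is  x v* M.\<close>

definition idx4 :: "4 \<Rightarrow> nat" where
  "idx4 i = (if i = 0 then 0 else if i = 1 then 1 else if i = 2 then 2 else 3)"

definition vec4 :: "'a \<Rightarrow> 'a \<Rightarrow> 'a \<Rightarrow> 'a \<Rightarrow> 'a ^ 4" where
  "vec4 x0 x1 x2 x3 = (\<chi> i. [x0, x1, x2, x3] ! idx4 i)"

definition mat4 :: "'a list list \<Rightarrow> 'a ^ 4 ^ 4" where
  "mat4 rs = (\<chi> i j. rs ! idx4 i ! idx4 j)"

definition smat :: "'a::times \<Rightarrow> 'a ^ 4 ^ 4 \<Rightarrow> 'a ^ 4 ^ 4" where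
  "smat c M = (\<chi> i j. c * M $ i $ j)"

definition span2 :: "'a::field ^ 4 \<Rightarrow> 'a ^ 4 \<Rightarrow> ('a ^ 4) set" where
  "span2 u v = {a *s u + b *s v | a b. True}"

definition lin_indep2 :: "'a::field ^ 4 \<Rightarrow> 'a ^ 4 \<Rightarrow> bool" where
  "lin_indep2 u v \<longleftrightarrow> (\<forall>a b. a *s u + b *s v = 0 \<longrightarrow> a = 0 \<and> b = 0)"

definition is_line :: "('a::field ^ 4) set \<Rightarrow> bool" where
  "is_line L \<longleftrightarrow> (\<exists>u v. lin_indep2 u v \<and> L = span2 u v)"

text \<open>Extension of a line of PG(3,q) to PG(3,q^2), the field F_{q^2} being a field 'b
  of size q^2 into which F_q = 'a is embedded by emb.\<close>
definition ext_line :: "('a \<Rightarrow> 'b::field) \<Rightarrow> ('a ^ 4) set \<Rightarrow> ('b ^ 4) set" where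
  "ext_line emb L = {a *s (\<chi> i. emb (u $ i)) + b *s (\<chi> i. emb (v $ i)) | a b u v. u \<in> L \<and> v \<in> L}"

definition Pt :: "'b::field \<Rightarrow> 'b ^ 4" where
  "Pt t = vec4 (t ^ 3) (t ^ 2) t 1"

definition imaginary_chord :: "('a::{finite,field} \<Rightarrow> 'b::field) \<Rightarrow> ('a ^ 4) set \<Rightarrow> bool" where
  "imaginary_chord emb L \<longleftrightarrow> is_line L \<and>
     (\<exists>t. t \<notin> range emb \<and> Pt t \<in> ext_line emb L \<and> Pt (t ^ CARD('a)) \<in> ext_line emb L)"

definition Mabcd :: "'a::field \<Rightarrow> 'a \<Rightarrow> 'a \<Rightarrow> 'a \<Rightarrow> 'a ^ 4 ^ 4" where
  "Mabcd a b c d = mat4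
    [[a^3, a^2*c, a*c^2, c^3],
     [3*a^2*b, a^2*d + 2*a*b*c, b*c^2 + 2*a*c*d, 3*c^2*d],
     [3*a*b^2, b^2*c + 2*a*b*d, a*d^2 + 2*b*c*d, 3*c*d^2],
     [b^3, b^2*d, b*d^2, d^3]]"

text \<open>A projectivity is represented by the class of its matrices modulo nonzero scalars.\<close>
definition proj_class :: "'a::field ^ 4 ^ 4 \<Rightarrow> ('a ^ 4 ^ 4) set" where
  "proj_class M = {smat c M | c. c \<noteq> 0}"

definition Gq :: "('a::{finite,field} ^ 4 ^ 4) set set" where
  "Gq = {proj_class (Mabcd a b c d) | a b c d. a * d - b * c \<noteq> 0}"

definition act_line :: "'a::field ^ 4 ^ 4 \<Rightarrow> ('a ^ 4) set \<Rightarrow> ('a ^ 4) set" where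
  "act_line M L = (\<lambda>x. x v* M) ` L"

definition stabiliser :: "('a::{finite,field} ^ 4) set \<Rightarrow> ('a ^ 4 ^ 4) set set" where
  "stabiliser L = {g \<in> Gq. \<forall>M\<in>g. act_line M L = L}"

definition orbit :: "('a::{finite,field} ^ 4) set \<Rightarrow> ('a ^ 4) set set" where
  "orbit L = {act_line M L | M g. g \<in> Gq \<and> M \<in> g}"

definition abs_trace :: "nat \<Rightarrow> 'a::field \<Rightarrow> 'a" where
  "abs_trace h \<eta> = (\<Sum>i<h. \<eta> ^ (2 ^ i))"

definition M_odd :: "'a::field \<Rightarrow> 'a \<Rightarrow> 'a \<Rightarrow> 'a \<Rightarrow> 'a ^ 4 ^ 4" where
  "M_odd \<rho> \<alpha> b d = mat4
    [[\<alpha>*d^3, \<alpha>*\<rho>*b*d^2, \<alpha>*\<rho>^2*b^2*d, \<alpha>*\<rho>^3*b^3],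
     [3*b*d^2, d^3 + 2*\<rho>*b^2*d, \<rho>^2*b^3 + 2*\<rho>*b*d^2, 3*\<rho>^2*b^2*d],
     [3*\<alpha>*b^2*d, \<alpha>*\<rho>*b^3 + 2*\<alpha>*b*d^2, \<alpha>*d^3 + 2*\<alpha>*\<rho>*b^2*d, 3*\<alpha>*\<rho>*b*d^2],
     [b^3, b^2*d, b*d^2, d^3]]"

definition M_even :: "'a::field \<Rightarrow> 'a \<Rightarrow> 'a \<Rightarrow> 'a \<Rightarrow> 'a ^ 4 ^ 4" where
  "M_even \<eta> \<alpha> c d = (let A = \<alpha>*c + d; B = \<eta>*c + (\<alpha>+1)*d in mat4
    [[A^3, c*A^2, c^2*A, c^3],
     [A^2*B, d*A^2, c^2*B, c^2*d],
     [A*B^2, c*B^2, A*d^2, c*d^2],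
     [B^3, d*B^2, d^2*B, d^3]])"

end

theory Submission
  imports Defs "HOL-Computational_Algebra.Polynomial" "HOL-Analysis.Cartesian_Space"
begin

text \<open>
  An element \<open>t\<close> of \<open>F\<^sub>q\<^sub>2\<close> outside \<open>F\<^sub>q\<close> is a root of an irreducible \<open>X\<^sup>2 - u X - v\<close> over \<open>F\<^sub>q\<close>;
  its conjugate \<open>t\<^sup>q = u - t\<close> is the other root, and the line through \<open>P\<^sub>t\<close> and \<open>P\<^sub>t\<^sup>q\<close> is spanned
  by the rational vectors \<open>(u\<^sup>2 + v, u, 1, 0)\<close> and \<open>(u v, v, 0, 1)\<close>. Conversely every imaginary
  chord is of this form, because the coordinates of its points with respect to a rational basis are
  fixed by the Frobenius map.

  \<open>M(a,b,c,d)\<close> maps \<open>P\<^sub>z\<close> to a multiple of \<open>P\<^bsub>(a z + b)/(c z + d)\<^esub>\<close>, so \<open>G\<^sub>q\<close> acts on the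
  imaginary chords as \<open>PGL(2,q)\<close> acts by Moebius maps on the conjugate pairs \<open>{t, t\<^sup>q}\<close>. The
  maps \<open>z \<mapsto> b z + a\<close> are already transitive, and the stabiliser of \<open>{t, t\<^sup>q}\<close> consists of the
  \<open>q + 1\<close> maps fixing \<open>t\<close> and the \<open>q + 1\<close> maps exchanging \<open>t\<close> and \<open>t\<^sup>q\<close>.

  The special lines are the chords through the roots of \<open>X\<^sup>2 = 1/\<rho>\<close> and \<open>X\<^sup>2 = X + \<eta>\<close>, which
  are irreducible since \<open>\<rho>\<close> is a non-square, respectively since every \<open>y\<^sup>2 + y\<close> has absolute
  trace \<open>0\<close>. Irreducible quadratics over \<open>F\<^sub>q\<close> have roots in \<open>F\<^sub>q\<^sub>2\<close> by counting: there are
  \<open>(q\<^sup>2 - q) / 2\<close> of them, as many as pairs of conjugates.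
\<close>

section \<open>Finite fields\<close>

lemma finite_field_power_card:
  fixes x :: "'a::{finite,field}"
  shows "x ^ CARD('a) = x"
proof (cases "x = 0")
  case False
  let ?U = "UNIV - {0::'a}"
  have "x ^ card ?U * \<Prod>?U = (\<Prod>y\<in>?U. x * y)"
    by (simp add: prod.distrib)
  also have "\<dots> = \<Prod>?U"
    by (rule prod.reindex_bij_witness[of _ "\<lambda>y. y / x" "\<lambda>y. x * y"]) (use False in auto)
  finally have "x ^ card ?U = 1"
    by simp
  moreover have "Suc (card ?U) = CARD('a)"
    by (rule card_Suc_Diff1) auto
  ultimately show ?thesis
    by (metis power_Suc mult_1_right)
qed (simp add: finite_UNIV_card_ge_0)

lemma two_le_card: "CARD('a::{finite,field}) \<ge> 2"
  using card_mono[of UNIV "{0, 1 :: 'a}"] by simp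

lemma card_eq_twice_card_image:
  assumes "finite A" and "\<And>x. x \<in> A \<Longrightarrow> card {y\<in>A. f y = f x} = 2"
  shows "card A = 2 * card (f ` A)"
proof -
  have "card A = card (\<Union>z\<in>f ` A. {y\<in>A. f y = z})"
    by (rule arg_cong[where f = card]) blast
  also have "\<dots> = (\<Sum>z\<in>f ` A. card {y\<in>A. f y = z})"
    using assms(1) by (intro card_UN_disjoint) auto
  also have "\<dots> = (\<Sum>z\<in>f ` A. 2)"
    using assms(2) by (intro sum.cong) auto
  finally show ?thesis
    by simp
qed

lemma sum_prod_eq_cases:
  fixes r s r' s' :: "'a::field"
  assumes "r' + s' = r + s" and "r' * s' = r * s"
  shows "(r' = r \<and> s' = s) \<or> (r' = s \<and> s' = r)"
proof -
  have "(r' - r) * (r' - s) = r' * (r' - (r + s)) + r * s"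
    by (simp add: algebra_simps)
  also have "\<dots> = r' * (r' - (r' + s')) + r' * s'"
    using assms by simp
  also have "\<dots> = 0"
    by (simp add: algebra_simps)
  finally show ?thesis
    using assms(1) by auto
qed

text \<open>The split monic quadratics are the \<open>(X - r)(X - s)\<close>: \<open>q\<close> with \<open>r = s\<close>, and one for
  every two ordered pairs with \<open>r \<noteq> s\<close>.\<close>
lemma card_split_quadratics:
  "2 * card {(u, v). \<exists>x :: 'a::{finite,field}. x\<^sup>2 = u * x + v} = CARD('a) * (CARD('a) + 1)"
proof -
  define V :: "'a \<times> 'a \<Rightarrow> 'a \<times> 'a" where "V = (\<lambda>(r, s). (r + s, - (r * s)))"
  define D where "D = range (\<lambda>r :: 'a. (r, r))"
  have split: "{(u, v). \<exists>x. x\<^sup>2 = u * x + v} = V ` D \<union> V ` (- D)"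
  proof -
    have "(u, v) \<in> range V" if "x\<^sup>2 = u * x + v" for u v x
      using that by (intro image_eqI[of _ _ "(x, u - x)"]) (auto simp: V_def power2_eq_square algebra_simps)
    moreover have "\<exists>x. x\<^sup>2 = u * x + v" if "(u, v) = V p" for u v p
      using that by (intro exI[of _ "fst p"]) (auto simp: V_def power2_eq_square algebra_simps split: prod.splits)
    ultimately show ?thesis
      by blast
  qed
  have V_eq: "V p = V p' \<longleftrightarrow> p' = p \<or> p' = prod.swap p" for p p'
    using sum_prod_eq_cases[of "fst p'" "snd p'" "fst p" "snd p"]
    by (cases p; cases p') (auto simp: V_def ac_simps)
  have card_D: "card D = CARD('a)"
    by (simp add: D_def card_image inj_on_def)
  have "inj_on V D"
    by (auto intro!: inj_onI simp: V_eq D_def)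
  then have card_V_D: "card (V ` D) = CARD('a)"
    by (simp add: card_image card_D)
  have "card {p' \<in> - D. V p' = V p} = 2" if "p \<in> - D" for p
  proof -
    have "{p' \<in> - D. V p' = V p} = {p, prod.swap p}"
      using that by (cases p) (auto simp: V_eq D_def)
    moreover have "prod.swap p \<noteq> p"
      using that by (cases p) (auto simp: D_def)
    ultimately show ?thesis
      by simp
  qed
  then have card_off: "card (- D) = 2 * card (V ` (- D))"
    by (intro card_eq_twice_card_image) auto
  have "card D + card (- D) = CARD('a) * CARD('a)"
    using card_Un_disjoint[of D "- D"] by (simp flip: Compl_eq_Diff_UNIV)
  moreover have "V ` D \<inter> V ` (- D) = {}"
    by (auto simp: V_eq D_def)
  then have "card (V ` D \<union> V ` (- D)) = CARD('a) + card (V ` (- D))"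
    by (simp add: card_Un_disjoint card_V_D)
  ultimately show ?thesis
    unfolding split card_off card_D by simp
qed

lemma two_eq_zero_if_even_card:
  assumes "even CARD('a::{finite,field})"
  shows "(2::'a) = 0"
proof (rule ccontr)
  assume "(2::'a) \<noteq> 0"
  let ?U = "UNIV - {0::'a}"
  have "card {y\<in>?U. {y, - y} = {x, - x}} = 2" if "x \<in> ?U" for x
  proof -
    have "x \<noteq> - x"
    proof
      assume "x = - x"
      then have "2 * x = 0"
        by (metis eq_neg_iff_add_eq_0 mult_2)
      then show False
        using that \<open>(2::'a) \<noteq> 0\<close> by simp
    qed
    moreover have "{y\<in>?U. {y, - y} = {x, - x}} = {x, - x}"
    proof
      show "{x, - x} \<subseteq> {y\<in>?U. {y, - y} = {x, - x}}"
        using that by (auto simp: insert_commute)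
    qed blast
    ultimately show ?thesis
      by simp
  qed
  then have "card ?U = 2 * card ((\<lambda>x. {x, - x}) ` ?U)"
    by (intro card_eq_twice_card_image) auto
  moreover have "Suc (card ?U) = CARD('a)"
    by (rule card_Suc_Diff1) auto
  ultimately show False
    using assms by (metis dvd_triv_left even_Suc)
qed

lemma quadratic_form_nonzero:
  fixes u v c d :: "'a::field"
  assumes irreducible: "\<forall>x. x\<^sup>2 \<noteq> u * x + v" and "c \<noteq> 0 \<or> d \<noteq> 0"
  shows "d * d + c * u * d - c * c * v \<noteq> 0"
proof (cases "c = 0")
  case False
  have "((- d / c)\<^sup>2 - (u * (- d / c) + v)) * (c * c) = d * d + c * u * d - c * c * v"
    using False by (simp add: field_simps power2_eq_square)
  then show ?thesis
    using False irreducible by (metis eq_iff_diff_eq_0 mult_eq_0_iff)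
qed (use assms in simp)

lemma char2_minus:
  assumes "(2::'a::field) = 0"
  shows "- x = (x::'a)"
proof -
  have "x + x = 2 * x"
    by simp
  also have "\<dots> = 0"
    using assms by simp
  finally show ?thesis
    by (simp only: neg_eq_iff_add_eq_0)
qed

lemma char2_diff:
  assumes "(2::'a::field) = 0"
  shows "x - y = x + (y::'a)"
  unfolding diff_conv_add_uminus char2_minus[OF assms] ..

lemma power2_add_char2:
  assumes "(2::'a::field) = 0"
  shows "(x + y) ^ 2 ^ i = x ^ 2 ^ i + (y::'a) ^ 2 ^ i"
proof (induction i)
  case (Suc i)
  have "(x + y) ^ 2 ^ Suc i = ((x + y) ^ 2 ^ i)\<^sup>2"
    by (simp add: power_mult[symmetric] mult.commute)
  also have "\<dots> = (x ^ 2 ^ i + y ^ 2 ^ i)\<^sup>2"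
    by (simp only: Suc.IH)
  also have "\<dots> = (x ^ 2 ^ i)\<^sup>2 + (y ^ 2 ^ i)\<^sup>2 + 2 * x ^ 2 ^ i * y ^ 2 ^ i"
    by (simp add: power2_eq_square algebra_simps)
  finally show ?case
    using assms by (simp add: power_mult[symmetric] mult.commute)
qed simp

lemma abs_trace_square_add_self:
  fixes y :: "'a::field"
  assumes two: "(2::'a) = 0"
  shows "abs_trace n (y\<^sup>2 + y) = y ^ 2 ^ n + y"
proof -
  have "(y\<^sup>2 + y) ^ 2 ^ i = y ^ 2 ^ Suc i - y ^ 2 ^ i" for i
  proof -
    have "(y\<^sup>2 + y) ^ 2 ^ i = (y\<^sup>2) ^ 2 ^ i + y ^ 2 ^ i"
      by (rule power2_add_char2[OF two])
    also have "(y\<^sup>2) ^ 2 ^ i = y ^ 2 ^ Suc i"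
      by (simp add: power_mult[symmetric])
    finally show ?thesis
      unfolding char2_diff[OF two] .
  qed
  then have "abs_trace n (y\<^sup>2 + y) = (\<Sum>i<n. y ^ 2 ^ Suc i - y ^ 2 ^ i)"
    unfolding abs_trace_def by simp
  also have "\<dots> = y ^ 2 ^ n - y"
    by (subst sum_lessThan_telescope[where f = "\<lambda>i. y ^ 2 ^ i"]) simp
  finally show ?thesis
    unfolding char2_diff[OF two] .
qed

lemma two_eq_zero_if_card_power2:
  assumes "CARD('a::{finite,field}) = 2 ^ h"
  shows "(2::'a) = 0"
proof -
  have "h \<noteq> 0"
    using assms two_le_card[where 'a = 'a] by (intro notI) simp
  then show ?thesis
    using assms by (intro two_eq_zero_if_even_card) simp
qed

lemma abs_trace_one_irreducible:
  assumes q: "CARD('a::{finite,field}) = 2 ^ h" and trace: "abs_trace h \<eta> = 1"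
  shows "\<forall>x::'a. x\<^sup>2 \<noteq> 1 * x + \<eta>"
proof (intro allI notI)
  fix x :: 'a assume "x\<^sup>2 = 1 * x + \<eta>"
  have two: "(2::'a) = 0"
    by (rule two_eq_zero_if_card_power2[OF q])
  have "\<eta> = x\<^sup>2 - x"
    using \<open>x\<^sup>2 = 1 * x + \<eta>\<close> by simp
  then have "abs_trace h \<eta> = x + x"
    using abs_trace_square_add_self[OF two] finite_field_power_card[of x] q
    by (simp add: char2_diff[OF two])
  also have "\<dots> = 0"
    using two by (simp flip: mult_2)
  finally show False
    using trace by simp
qed

section \<open>Coordinates in \<open>PG(3,q)\<close>\<close>

lemma four_cases: "(i::4) = 0 \<or> i = 1 \<or> i = 2 \<or> i = 3"
  using exhaust_4[of i] by auto

lemma idx4_simps [simp]: "idx4 0 = 0" "idx4 1 = 1" "idx4 2 = 2" "idx4 3 = 3"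
  by (simp_all add: idx4_def)

lemma vec4_nth [simp]:
  "vec4 a b c d $ 0 = a" "vec4 a b c d $ 1 = b" "vec4 a b c d $ 2 = c" "vec4 a b c d $ 3 = d"
  by (simp_all add: vec4_def)

lemma vec4_eq_iff: "(x::'a^4) = y \<longleftrightarrow> x$0 = y$0 \<and> x$1 = y$1 \<and> x$2 = y$2 \<and> x$3 = y$3"
proof
  assume "x$0 = y$0 \<and> x$1 = y$1 \<and> x$2 = y$2 \<and> x$3 = y$3"
  then show "x = y"
    unfolding vec_eq_iff using four_cases by metis
qed simp

lemma mat4_nth [simp]: "mat4 rs $ i $ j = rs ! idx4 i ! idx4 j"
  by (simp add: mat4_def)

lemma UNIV_4_eq: "(UNIV :: 4 set) = {0, 1, 2, 3}"
  using four_cases by auto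

lemma mat4_eq_iff: "(M::'a^4^4) = N \<longleftrightarrow> (\<forall>i\<in>{0,1,2,3}. \<forall>j\<in>{0,1,2,3}. M$i$j = N$i$j)"
  by (simp add: vec_eq_iff flip: UNIV_4_eq)

lemma vector_matrix_mult_4:
  "((x::'a::comm_semiring_1^4) v* M) $ j = x$0 * M$0$j + x$1 * M$1$j + x$2 * M$2$j + x$3 * M$3$j"
  unfolding vector_matrix_mult_def UNIV_4_eq by (simp add: ac_simps)

lemma smat_nth [simp]: "smat c M $ i $ j = c * M $ i $ j"
  by (simp add: smat_def)

lemma vector_matrix_mult_smat: "x v* smat c M = c *s (x v* (M::'a::comm_ring_1^4^4))"
  by (simp add: vec_eq_iff vector_matrix_mult_4 algebra_simps)

lemma smat_smat: "smat a (smat b M) = smat (a * b) (M::'a::field^4^4)"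
  by (simp add: vec_eq_iff mult.assoc)

lemma proj_class_refl: "M \<in> proj_class (M::'a::field^4^4)"
  unfolding proj_class_def by (intro CollectI exI[of _ 1]) (simp add: vec_eq_iff)

lemma proj_class_smat:
  assumes "(m::'a::field) \<noteq> 0"
  shows "proj_class (smat m M) = proj_class M"
proof
  show "proj_class (smat m M) \<subseteq> proj_class M"
    using assms unfolding proj_class_def by (auto simp: smat_smat)
  show "proj_class M \<subseteq> proj_class (smat m M)"
  proof
    fix N assume "N \<in> proj_class M"
    then obtain c where "c \<noteq> 0" "N = smat c M"
      unfolding proj_class_def by blast
    then have "c / m \<noteq> 0" "N = smat (c / m) (smat m M)"
      using assms by (simp_all add: smat_smat)
    then show "N \<in> proj_class (smat m M)"
      unfolding proj_class_def by blast
  qed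
qed

lemma proj_class_eqD:
  assumes "proj_class M = proj_class (N::'a::field^4^4)"
  shows "\<exists>m. m \<noteq> 0 \<and> M = smat m N"
proof -
  have "M \<in> proj_class N"
    using proj_class_refl[of M] assms by simp
  then show ?thesis
    unfolding proj_class_def by blast
qed

lemma Mabcd_scale: "Mabcd (l*a) (l*b) (l*c) (l*d) = smat (l^3) (Mabcd a b c (d::'a::field))"
  unfolding mat4_eq_iff by (simp add: Mabcd_def power2_eq_square power3_eq_cube algebra_simps)

lemma span2_memI: "a *s u + b *s v \<in> span2 u v"
  unfolding span2_def by blast

lemma span2_base: "u \<in> span2 u v" "v \<in> span2 u v"
  using span2_memI[of 1 u 0 v] span2_memI[of 0 u 1 v] by simp_all

lemma span2_subset:
  fixes u v :: "'a::field ^ 4"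
  assumes "u' \<in> span2 u v" "v' \<in> span2 u v"
  shows "span2 u' v' \<subseteq> span2 u v"
proof
  fix x assume "x \<in> span2 u' v'"
  then obtain \<alpha> \<beta> where x: "x = \<alpha> *s u' + \<beta> *s v'"
    by (auto simp: span2_def)
  obtain a b c d where "u' = a *s u + b *s v" "v' = c *s u + d *s v"
    using assms by (auto simp: span2_def)
  then have "x = (\<alpha> * a + \<beta> * c) *s u + (\<alpha> * b + \<beta> * d) *s v"
    unfolding x by (simp add: vec_eq_iff algebra_simps)
  then show "x \<in> span2 u v"
    by (simp add: span2_memI)
qed

lemma span2_closed:
  "x \<in> span2 u v \<Longrightarrow> y \<in> span2 u v \<Longrightarrow> a *s x + b *s y \<in> span2 (u::'a::field^4) v"
  using span2_subset span2_memI by blast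

lemma span2_eq_if_indep:
  fixes u v :: "'a::field ^ 4"
  assumes indep: "lin_indep2 u' v'" and mem: "u' \<in> span2 u v" "v' \<in> span2 u v"
  shows "span2 u' v' = span2 u v"
proof
  show "span2 u' v' \<subseteq> span2 u v"
    using mem by (rule span2_subset)
  obtain a b c d where u': "u' = a *s u + b *s v" and v': "v' = c *s u + d *s v"
    using mem by (auto simp: span2_def)
  let ?D = "a * d - b * c"
  have u: "?D *s u = d *s u' + (- b) *s v'" and v: "?D *s v = (- c) *s u' + a *s v'"
    unfolding u' v' by (simp_all add: vec_eq_iff algebra_simps)
  have "?D \<noteq> 0"
  proof
    assume "?D = 0"
    then have "d *s u' + (- b) *s v' = 0" "(- c) *s u' + a *s v' = 0"
      using u v by simp_all
    then have "- b = 0" "a = 0"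
      using indep unfolding lin_indep2_def by blast+
    then have "1 *s u' + 0 *s v' = 0"
      using u' by simp
    then have "(1::'a) = 0"
      using indep unfolding lin_indep2_def by blast
    then show False
      by simp
  qed
  have "?D *s u \<in> span2 u' v'" "?D *s v \<in> span2 u' v'"
    unfolding u v by (rule span2_memI)+
  then have "(1 / ?D) *s (?D *s u) + 0 *s (?D *s u) \<in> span2 u' v'"
    "(1 / ?D) *s (?D *s v) + 0 *s (?D *s v) \<in> span2 u' v'"
    by (blast intro: span2_closed)+
  then have "u \<in> span2 u' v'" "v \<in> span2 u' v'"
    using \<open>?D \<noteq> 0\<close> by (simp_all add: vector_smult_assoc)
  then show "span2 u v \<subseteq> span2 u' v'"
    by (rule span2_subset)
qed

lemma act_line_span2: "act_line M (span2 u v) = span2 (u v* M) (v v* (M::'a::field^4^4))"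
proof -
  have lin: "(a *s u + b *s v) v* M = a *s (u v* M) + b *s (v v* M)" for a b
    by (simp add: vector_matrix_left_distrib scalar_vector_matrix_assoc)
  show ?thesis
  proof
    show "act_line M (span2 u v) \<subseteq> span2 (u v* M) (v v* M)"
      unfolding act_line_def span2_def using lin by auto
    show "span2 (u v* M) (v v* M) \<subseteq> act_line M (span2 u v)"
    proof
      fix y assume "y \<in> span2 (u v* M) (v v* M)"
      then obtain a b where "y = (a *s u + b *s v) v* M"
        unfolding span2_def lin by blast
      then show "y \<in> act_line M (span2 u v)"
        unfolding act_line_def by (blast intro: span2_memI)
    qed
  qed
qed

lemma Pt_mult_Mabcd:
  fixes a b c d z :: "'a::field"
  assumes "c * z + d \<noteq> 0"
  shows "Pt z v* Mabcd a b c d = (c * z + d)^3 *s Pt ((a * z + b) / (c * z + d))"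
proof -
  define w where "w = c * z + d"
  define n where "n = a * z + b"
  have "Pt z v* Mabcd a b c d = vec4 (n^3) (n^2 * w) (n * w^2) (w^3)"
    unfolding vec4_eq_iff vector_matrix_mult_4 Pt_def Mabcd_def n_def w_def
    by (simp add: power2_eq_square power3_eq_cube algebra_simps)
  also have "\<dots> = w^3 *s Pt (n / w)"
    using assms by (simp add: vec4_eq_iff Pt_def w_def power_divide power2_eq_square power3_eq_cube)
  finally show ?thesis
    by (simp add: n_def w_def)
qed

lemma lin_indep2_Pt:
  assumes "z \<noteq> z'"
  shows "lin_indep2 (Pt z) (Pt z')"
  unfolding lin_indep2_def
proof (intro allI impI)
  fix \<alpha> \<beta> assume "\<alpha> *s Pt z + \<beta> *s Pt z' = 0"
  then have sum: "\<alpha> + \<beta> = 0" and lin: "\<alpha> * z + \<beta> * z' = 0"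
    by (auto simp: Pt_def vec4_eq_iff)
  have "\<alpha> * (z - z') = (\<alpha> * z + \<beta> * z') - (\<alpha> + \<beta>) * z'"
    by (simp add: algebra_simps)
  then have "\<alpha> = 0"
    using sum lin assms by simp
  then show "\<alpha> = 0 \<and> \<beta> = 0"
    using sum by simp
qed

lemma Pt_not_in_span2:
  fixes z1 z2 z3 :: "'a::field"
  assumes "z1 \<noteq> z2" "z1 \<noteq> z3" "z2 \<noteq> z3"
  shows "Pt z3 \<notin> span2 (Pt z1) (Pt z2)"
proof
  assume "Pt z3 \<in> span2 (Pt z1) (Pt z2)"
  then obtain \<alpha> \<beta> where e: "Pt z3 = \<alpha> *s Pt z1 + \<beta> *s Pt z2"
    by (auto simp: span2_def)
  have e3: "\<alpha> + \<beta> - 1 = 0" and e2: "\<alpha> * z1 + \<beta> * z2 - z3 = 0"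
    and e1: "\<alpha> * z1\<^sup>2 + \<beta> * z2\<^sup>2 - z3\<^sup>2 = 0"
    using arg_cong[OF e, of "\<lambda>x. x $ 3"] arg_cong[OF e, of "\<lambda>x. x $ 2"] arg_cong[OF e, of "\<lambda>x. x $ 1"]
    by (simp_all add: Pt_def)
  have "\<beta> * ((z2 - z3) * (z2 - z1))
      = (\<alpha> * z1\<^sup>2 + \<beta> * z2\<^sup>2 - z3\<^sup>2) - (z1 + z3) * (\<alpha> * z1 + \<beta> * z2 - z3)
        + z1 * z3 * (\<alpha> + \<beta> - 1)"
    by (simp add: algebra_simps power2_eq_square)
  then have "\<beta> = 0"
    using e1 e2 e3 assms by simp
  moreover have "\<alpha> * (z1 - z3) = (\<alpha> * z1 + \<beta> * z2 - z3) - z3 * (\<alpha> + \<beta> - 1)"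
    using \<open>\<beta> = 0\<close> by (simp add: algebra_simps)
  ultimately show False
    using e2 e3 assms by simp
qed

definition chord_base1 :: "'a::field \<Rightarrow> 'a \<Rightarrow> 'a^4" where
  "chord_base1 u v = vec4 (u\<^sup>2 + v) u 1 0"

definition chord_base2 :: "'a::field \<Rightarrow> 'a \<Rightarrow> 'a^4" where
  "chord_base2 u v = vec4 (u * v) v 0 1"

lemma lin_indep2_chord_base: "lin_indep2 (chord_base1 u v) (chord_base2 u v)"
  unfolding lin_indep2_def
proof (intro allI impI)
  fix a b assume "a *s chord_base1 u v + b *s chord_base2 u v = 0"
  from arg_cong[OF this, of "\<lambda>x. x $ 2"] arg_cong[OF this, of "\<lambda>x. x $ 3"]
  show "a = 0 \<and> b = 0"
    by (simp add: chord_base1_def chord_base2_def)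
qed

lemma lin_indep2_image:
  fixes M :: "'a::field^4^4"
  assumes "lin_indep2 u v" and "\<And>x. x \<in> span2 u v \<Longrightarrow> x v* M = 0 \<Longrightarrow> x = 0"
  shows "lin_indep2 (u v* M) (v v* M)"
  unfolding lin_indep2_def
proof (intro allI impI)
  fix a b assume "a *s (u v* M) + b *s (v v* M) = 0"
  then have "(a *s u + b *s v) v* M = 0"
    by (simp add: vector_matrix_left_distrib scalar_vector_matrix_assoc)
  then have "a *s u + b *s v = 0"
    using assms(2) span2_memI by blast
  then show "a = 0 \<and> b = 0"
    using assms(1) by (simp add: lin_indep2_def)
qed

section \<open>The quadratic extension\<close>

locale quadratic_extension =
  fixes emb :: "'a::{finite,field} \<Rightarrow> 'b::{finite,field}"
  assumes card_ext: "CARD('b) = CARD('a) ^ 2"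
    and inj_emb: "inj emb"
    and emb_add [simp]: "\<And>x y. emb (x + y) = emb x + emb y"
    and emb_mult [simp]: "\<And>x y. emb (x * y) = emb x * emb y"
    and emb_one [simp]: "emb 1 = 1"
begin

lemma emb_zero [simp]: "emb 0 = 0"
  using emb_add[of 0 0] by (metis add_cancel_right_right)

lemma emb_minus [simp]: "emb (- x) = - emb x"
  using emb_add[of "- x" x] by (simp add: eq_neg_iff_add_eq_0)

lemma emb_diff [simp]: "emb (x - y) = emb x - emb y"
  using emb_add[of x "- y"] by simp

lemma emb_power [simp]: "emb (x ^ n) = emb x ^ n"
  by (induction n) simp_all

lemma emb_numeral [simp]: "emb (numeral n) = numeral n"
  by (induction n) (simp_all only: numeral.simps emb_add emb_one)

lemma emb_eq_iff [simp]: "emb x = emb y \<longleftrightarrow> x = y"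
  using inj_emb by (auto dest: injD)

lemma emb_eq_0_iff [simp]: "emb x = 0 \<longleftrightarrow> x = 0"
  using emb_eq_iff[of x 0] by (simp del: emb_eq_iff)

lemma emb_divide [simp]: "emb (x / y) = emb x / emb y"
proof (cases "y = 0")
  case False
  then have "emb (x / y) * emb y = emb x"
    by (simp flip: emb_mult)
  then show ?thesis
    using False by (simp add: eq_divide_eq)
qed simp

lemma card_range_emb: "card (range emb) = CARD('a)"
  using inj_emb by (simp add: card_image)

lemma exists_not_in_range_emb: "\<exists>t. t \<notin> range emb"
proof (rule ccontr)
  assume "\<nexists>t. t \<notin> range emb"
  then have "range emb = UNIV"
    by blast
  then have "CARD('a) ^ 2 = CARD('a)"
    using card_ext card_range_emb by simp
  then show False
    using two_le_card[where 'a = 'a] by (simp add: power2_eq_square)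
qed

lemma emb_coords_unique:
  assumes "t \<notin> range emb" and "emb a + emb b * t = emb a' + emb b' * t"
  shows "a = a' \<and> b = b'"
proof (cases "b = b'")
  case False
  then have "t = emb ((a - a') / (b' - b))"
    using assms(2) by (simp add: field_simps)
  then show ?thesis
    using assms(1) by blast
qed (use assms(2) in simp)

lemma emb_coords_exist:
  assumes "t \<notin> range emb"
  shows "\<exists>a b. y = emb a + emb b * t"
proof -
  let ?coords = "\<lambda>(a, b). emb a + emb b * t"
  have "inj ?coords"
    using emb_coords_unique[OF assms] by (auto intro!: injI)
  then have "card (range ?coords) = CARD('b)"
    by (simp add: card_image card_ext power2_eq_square)
  then have "range ?coords = UNIV"
    by (intro card_subset_eq) auto
  then show ?thesis
    by (metis (mono_tags, lifting) UNIV_I case_prod_beta imageE)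
qed

lemma exists_quadratic:
  assumes "t \<notin> range emb"
  shows "\<exists>u v. t\<^sup>2 = emb u * t + emb v"
  using emb_coords_exist[OF assms, of "t\<^sup>2"] by (auto simp: add.commute)

definition frob :: "'b \<Rightarrow> 'b" where
  "frob x = x ^ card (range emb)"

lemma frob_eq_power: "frob x = x ^ CARD('a)"
  by (simp add: frob_def card_range_emb)

lemma frob_emb [simp]: "frob (emb a) = emb a"
  by (simp add: frob_eq_power finite_field_power_card flip: emb_power)

lemma frob_mult: "frob (x * y) = frob x * frob y"
  by (simp add: frob_eq_power power_mult_distrib)

lemma frob_power: "frob (x ^ n) = frob x ^ n"
  by (simp add: frob_eq_power flip: power_mult) (simp add: mult.commute)

lemma frob_divide: "frob (x / y) = frob x / frob y"
  by (simp add: frob_eq_power power_divide)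

text \<open>The polynomial \<open>(X + c)\<^sup>q - X\<^sup>q - c\<close> has degree below \<open>q\<close> but vanishes on the \<open>q\<close>
  elements of the base field, so it is zero.\<close>
lemma frob_add_emb: "frob (y + emb a) = frob y + emb a"
proof -
  let ?q = "CARD('a)"
  define P where "P = [:emb a, 1:] ^ ?q - monom 1 ?q - [:emb a:]"
  have roots: "range emb \<subseteq> {x. poly P x = 0}"
    by (auto simp: P_def poly_monom finite_field_power_card simp flip: emb_add emb_power emb_diff)
  have "P = 0"
  proof (rule ccontr)
    assume "P \<noteq> 0"
    have "degree P \<le> ?q"
      unfolding P_def by (intro degree_diff_le) (auto simp: degree_linear_power degree_monom_le)
    moreover have "coeff P ?q = 0"
      using two_le_card[where 'a = 'a] by (simp add: P_def coeff_linear_power coeff_pCons split: nat.split)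
    then have "degree P \<noteq> ?q"
      using \<open>P \<noteq> 0\<close> leading_coeff_neq_0 by metis
    ultimately have "degree P < card (range emb)"
      by (simp add: card_range_emb)
    moreover have "card (range emb) \<le> card {x. poly P x = 0}"
      using roots by (intro card_mono) auto
    ultimately show False
      using card_poly_roots_bound[OF \<open>P \<noteq> 0\<close>] by linarith
  qed
  then have "[:emb a, 1:] ^ ?q = monom 1 ?q + [:emb a:]"
    by (simp add: P_def diff_eq_eq)
  from arg_cong[OF this, of "\<lambda>p. poly p y"] show ?thesis
    by (simp add: poly_monom frob_eq_power add.commute)
qed

lemma frob_coords: "frob (emb a + emb b * t) = emb a + emb b * frob t"
  using frob_add_emb[of "emb b * t" a] by (simp add: frob_mult add.commute)

lemma frob_add: "frob (x + y) = frob x + frob y"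
proof -
  obtain t where t: "t \<notin> range emb"
    using exists_not_in_range_emb by blast
  obtain a b a' b' where x: "x = emb a + emb b * t" and y: "y = emb a' + emb b' * t"
    using emb_coords_exist[OF t] by metis
  have "x + y = emb (a + a') + emb (b + b') * t"
    by (simp add: x y algebra_simps)
  then have "frob (x + y) = emb (a + a') + emb (b + b') * frob t"
    by (simp only: frob_coords)
  then show ?thesis
    unfolding x y frob_coords by (simp add: algebra_simps)
qed


lemma frob_frob [simp]: "frob (frob x) = x"
  using finite_field_power_card[of x] by (simp add: frob_eq_power card_ext power2_eq_square power_mult)

lemma frob_eq_self_iff: "frob x = x \<longleftrightarrow> x \<in> range emb"
proof
  assume fixed: "frob x = x"
  define P :: "'b poly" where "P = monom 1 CARD('a) + [:0, - 1:]"
  have "degree P = CARD('a)"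
    using two_le_card[where 'a = 'a] unfolding P_def
    by (subst degree_add_eq_left) (auto simp: degree_monom_eq)
  then have "P \<noteq> 0"
    using two_le_card[where 'a = 'a] by auto
  have roots: "poly P y = 0 \<longleftrightarrow> frob y = y" for y
    by (simp add: P_def frob_eq_power poly_monom)
  have "range emb \<subseteq> {y. poly P y = 0}"
    by (auto simp: roots)
  moreover have "card {y. poly P y = 0} \<le> card (range emb)"
    using card_poly_roots_bound[OF \<open>P \<noteq> 0\<close>] \<open>degree P = CARD('a)\<close> by (simp add: card_range_emb)
  ultimately have "range emb = {y. poly P y = 0}"
    by (intro card_seteq) auto
  then show "x \<in> range emb"
    using fixed roots by blast
qed auto

lemma frob_not_in_range: "t \<notin> range emb \<Longrightarrow> frob t \<notin> range emb"
  using frob_eq_self_iff frob_frob by metis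

lemma frob_root:
  assumes "t\<^sup>2 = emb u * t + emb v"
  shows "(frob t)\<^sup>2 = emb u * frob t + emb v"
  using arg_cong[OF assms, of frob] by (simp add: frob_power frob_add frob_mult)

lemma frob_eq_trace_minus:
  assumes t: "t \<notin> range emb" and root: "t\<^sup>2 = emb u * t + emb v"
  shows "frob t = emb u - t"
proof -
  have "(frob t - t) * (frob t + t - emb u) = (frob t)\<^sup>2 - emb u * frob t - (t\<^sup>2 - emb u * t)"
    by (simp add: algebra_simps power2_eq_square)
  also have "\<dots> = 0"
    using frob_root[OF root] root by simp
  finally have "frob t + t - emb u = 0"
    using frob_eq_self_iff t by auto
  then show ?thesis
    by (simp add: algebra_simps)
qed

lemma quadratic_root_set:
  assumes t: "t \<notin> range emb" and root: "t\<^sup>2 = emb u * t + emb v"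
  shows "{s. s\<^sup>2 = emb u * s + emb v} = {t, frob t}"
proof -
  have "s\<^sup>2 - (emb u * s + emb v) = (s - t) * (s - frob t)" for s
    using root by (simp add: frob_eq_trace_minus[OF t root] algebra_simps power2_eq_square)
  then have "s\<^sup>2 = emb u * s + emb v \<longleftrightarrow> (s - t) * (s - frob t) = 0" for s
    by (metis eq_iff_diff_eq_0)
  then show ?thesis
    by auto
qed

lemma root_not_in_range:
  assumes "\<forall>x. x\<^sup>2 \<noteq> u * x + v" and "t\<^sup>2 = emb u * t + emb v"
  shows "t \<notin> range emb"
  using assms by (auto simp flip: emb_power emb_mult emb_add)

lemma no_root_in_base:
  assumes t: "t \<notin> range emb" and root: "t\<^sup>2 = emb u * t + emb v"
  shows "x\<^sup>2 \<noteq> u * x + v"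
proof
  assume "x\<^sup>2 = u * x + v"
  then have "emb x \<in> {s. s\<^sup>2 = emb u * s + emb v}"
    by (simp flip: emb_power emb_mult emb_add)
  then have "emb x = t \<or> emb x = frob t"
    using quadratic_root_set[OF t root] by blast
  then show False
    using t frob_not_in_range[OF t] by (metis rangeI)
qed

lemma card_compl_range_emb:
  "card (- range emb) = 2 * card {(u, v). (\<forall>x. x\<^sup>2 \<noteq> u * x + v) \<and> (\<exists>t. t\<^sup>2 = emb u * t + emb v)}"
    (is "_ = 2 * card ?J")
proof -
  define roots where "roots = (\<lambda>(u, v). {t. t\<^sup>2 = emb u * t + emb v})"
  have roots_outside: "roots p \<subseteq> - range emb" if "p \<in> ?J" for p
    using that root_not_in_range[of "fst p" "snd p"] by (cases p) (auto simp: roots_def)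
  have cover: "- range emb = (\<Union>p\<in>?J. roots p)"
  proof
    show "- range emb \<subseteq> (\<Union>p\<in>?J. roots p)"
    proof
      fix t assume t: "t \<in> - range emb"
      then obtain u v where root: "t\<^sup>2 = emb u * t + emb v"
        using exists_quadratic by blast
      then have "(u, v) \<in> ?J"
        using no_root_in_base t by auto
      then show "t \<in> (\<Union>p\<in>?J. roots p)"
        using root by (auto simp: roots_def)
    qed
  qed (use roots_outside in blast)
  have disjoint: "roots p \<inter> roots p' = {}" if "p \<in> ?J" "p' \<in> ?J" "p \<noteq> p'" for p p'
  proof (rule ccontr)
    assume "roots p \<inter> roots p' \<noteq> {}"
    then obtain t where "t \<in> roots p" "t \<in> roots p'"
      by blast
    moreover have "t \<notin> range emb"
      using roots_outside \<open>p \<in> ?J\<close> \<open>t \<in> roots p\<close> by blast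
    ultimately have "p = p'"
      using emb_coords_unique[of t "snd p" "fst p" "snd p'" "fst p'"]
      by (auto simp: roots_def add.commute prod_eq_iff split: prod.splits)
    then show False
      using that by blast
  qed
  have "card (roots p) = 2" if p: "p \<in> ?J" for p
  proof -
    obtain t where t: "t \<in> roots p"
      using p by (cases p) (auto simp: roots_def)
    then have "t \<notin> range emb"
      using roots_outside p by blast
    then show ?thesis
      using t quadratic_root_set frob_eq_self_iff[of t] by (cases p) (auto simp: roots_def)
  qed
  then show ?thesis
    unfolding cover using disjoint by (simp add: card_UN_disjoint)
qed

lemma irreducible_quadratic_has_root:
  assumes irreducible: "\<forall>x. x\<^sup>2 \<noteq> u * x + v"
  shows "\<exists>t. t\<^sup>2 = emb u * t + emb v"
proof -
  define I where "I = {(u, v). \<forall>x :: 'a. x\<^sup>2 \<noteq> u * x + v}"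
  define J where "J = {(u, v). (\<forall>x :: 'a. x\<^sup>2 \<noteq> u * x + v) \<and> (\<exists>t. t\<^sup>2 = emb u * t + emb v)}"
  have "2 * card J = CARD('a) * CARD('a) - CARD('a)"
    unfolding J_def card_compl_range_emb[symmetric]
    by (simp add: Compl_eq_Diff_UNIV card_Diff_subset card_range_emb card_ext power2_eq_square)
  moreover have "card I + card (- I) = CARD('a) * CARD('a)"
    using card_Un_disjoint[of I "- I"] by (simp flip: Compl_eq_Diff_UNIV)
  moreover have "- I = {(u, v). \<exists>x :: 'a. x\<^sup>2 = u * x + v}"
    by (auto simp: I_def)
  ultimately have "card J = card I"
    using card_split_quadratics[where 'a = 'a] by (simp add: algebra_simps)
  then have "J = I"
    by (intro card_subset_eq) (auto simp: I_def J_def)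
  then have "(u, v) \<in> J"
    using irreducible by (simp add: I_def)
  then show ?thesis
    by (simp add: J_def)
qed

section \<open>Imaginary chords\<close>

definition emb_vec :: "'a^4 \<Rightarrow> 'b^4" where
  "emb_vec x = (\<chi> i. emb (x $ i))"

lemma emb_vec_nth [simp]: "emb_vec x $ i = emb (x $ i)"
  by (simp add: emb_vec_def)

lemma emb_vec_scale: "emb_vec (a *s x) = emb a *s emb_vec x"
  by (simp add: vec_eq_iff)

lemma emb_vec_lincomb: "emb_vec (a *s x + b *s y) = emb a *s emb_vec x + emb b *s emb_vec y"
  by (simp add: vec_eq_iff)

lemma emb_vec_eq_iff [simp]: "emb_vec x = emb_vec y \<longleftrightarrow> x = y"
  by (simp add: vec_eq_iff)

lemma emb_vec_eq_0_iff [simp]: "emb_vec x = 0 \<longleftrightarrow> x = 0"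
  by (simp add: vec_eq_iff)

lemma ext_line_emb_vec: "ext_line emb L = {a *s emb_vec u + b *s emb_vec v | a b u v. u \<in> L \<and> v \<in> L}"
  unfolding ext_line_def emb_vec_def by simp

definition chord :: "'b \<Rightarrow> ('a^4) set" where
  "chord t = {x. \<exists>\<alpha> \<beta>. emb_vec x = \<alpha> *s Pt t + \<beta> *s Pt (frob t)}"

lemma Pt_chord_base:
  assumes "t\<^sup>2 = emb u * t + emb v"
  shows "Pt t = t *s emb_vec (chord_base1 u v) + emb_vec (chord_base2 u v)"
proof -
  have "t ^ 3 = t * t\<^sup>2"
    by (simp add: power2_eq_square power3_eq_cube)
  also have "\<dots> = t * (emb u * t + emb v)"
    by (simp only: assms)
  also have "\<dots> = emb u * t\<^sup>2 + emb v * t"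
    by (simp add: algebra_simps power2_eq_square)
  also have "\<dots> = emb u * (emb u * t + emb v) + emb v * t"
    by (simp only: assms)
  also have "\<dots> = t * ((emb u)\<^sup>2 + emb v) + emb u * emb v"
    by (simp add: algebra_simps power2_eq_square)
  finally show ?thesis
    using assms by (simp add: vec4_eq_iff Pt_def chord_base1_def chord_base2_def)
qed

lemma chord_eq_span2:
  assumes t: "t \<notin> range emb" and root: "t\<^sup>2 = emb u * t + emb v"
  shows "chord t = span2 (chord_base1 u v) (chord_base2 u v)"
proof
  let ?X = "chord_base1 u v" and ?Y = "chord_base2 u v"
  have "t \<noteq> frob t"
    using frob_eq_self_iff t by metis
  have Pt_lincomb: "\<alpha> *s Pt t + \<beta> *s Pt (frob t)
      = (\<alpha> * t + \<beta> * frob t) *s emb_vec ?X + (\<alpha> + \<beta>) *s emb_vec ?Y" for \<alpha> \<beta>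
    unfolding Pt_chord_base[OF root] Pt_chord_base[OF frob_root[OF root]]
    by (simp add: vec_eq_iff algebra_simps)
  show "chord t \<subseteq> span2 ?X ?Y"
  proof
    fix x assume "x \<in> chord t"
    then obtain \<alpha> \<beta> where x: "emb_vec x = (\<alpha> * t + \<beta> * frob t) *s emb_vec ?X + (\<alpha> + \<beta>) *s emb_vec ?Y"
      by (auto simp: chord_def Pt_lincomb)
    have "emb (x $ 2) = \<alpha> * t + \<beta> * frob t" "emb (x $ 3) = \<alpha> + \<beta>"
      using arg_cong[OF x, of "\<lambda>y. y $ 2"] arg_cong[OF x, of "\<lambda>y. y $ 3"]
      by (simp_all add: chord_base1_def chord_base2_def)
    then have "emb_vec x = emb_vec (x $ 2 *s ?X + x $ 3 *s ?Y)"
      unfolding x emb_vec_lincomb by simp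
    then show "x \<in> span2 ?X ?Y"
      by (metis emb_vec_eq_iff span2_memI)
  qed
  show "span2 ?X ?Y \<subseteq> chord t"
  proof
    fix x assume "x \<in> span2 ?X ?Y"
    then obtain a b where x: "x = a *s ?X + b *s ?Y"
      by (auto simp: span2_def)
    define \<alpha> where "\<alpha> = (emb a - emb b * frob t) / (t - frob t)"
    have "\<alpha> * (t - frob t) = emb a - emb b * frob t"
      using \<open>t \<noteq> frob t\<close> by (simp add: \<alpha>_def)
    then have "\<alpha> * t + (emb b - \<alpha>) * frob t = emb a"
      by (simp add: algebra_simps)
    then have "emb_vec x = \<alpha> *s Pt t + (emb b - \<alpha>) *s Pt (frob t)"
      unfolding Pt_lincomb x emb_vec_lincomb by simp
    then show "x \<in> chord t"
      by (auto simp: chord_def)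
  qed
qed

lemma chord_is_line: "t \<notin> range emb \<Longrightarrow> is_line (chord t)"
  using exists_quadratic chord_eq_span2 lin_indep2_chord_base unfolding is_line_def by metis

lemma imaginary_chord_chord:
  assumes t: "t \<notin> range emb"
  shows "imaginary_chord emb (chord t)"
proof -
  obtain u v where root: "t\<^sup>2 = emb u * t + emb v"
    using exists_quadratic[OF t] by blast
  let ?X = "chord_base1 u v" and ?Y = "chord_base2 u v"
  have "?X \<in> chord t" "?Y \<in> chord t"
    unfolding chord_eq_span2[OF t root] by (simp_all add: span2_base)
  moreover have "Pt s = s *s emb_vec ?X + 1 *s emb_vec ?Y" if "s\<^sup>2 = emb u * s + emb v" for s
    using Pt_chord_base[OF that] by simp
  ultimately have "Pt s \<in> ext_line emb (chord t)" if "s\<^sup>2 = emb u * s + emb v" for s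
    using that unfolding ext_line_emb_vec by blast
  then show ?thesis
    unfolding imaginary_chord_def frob_eq_power[symmetric]
    using chord_is_line[OF t] t root frob_root[OF root] by blast
qed

lemma lin_indep2_emb_vec:
  assumes t: "t \<notin> range emb" and indep: "lin_indep2 u v"
  shows "lin_indep2 (emb_vec u) (emb_vec v)"
  unfolding lin_indep2_def
proof (intro allI impI)
  fix \<gamma> \<delta> assume zero: "\<gamma> *s emb_vec u + \<delta> *s emb_vec v = 0"
  obtain g1 g2 d1 d2 where g: "\<gamma> = emb g1 + emb g2 * t" and d: "\<delta> = emb d1 + emb d2 * t"
    using emb_coords_exist[OF t] by metis
  have "g1 * u $ i + d1 * v $ i = 0 \<and> g2 * u $ i + d2 * v $ i = 0" for i
  proof -
    have "emb (g1 * u $ i + d1 * v $ i) + emb (g2 * u $ i + d2 * v $ i) * t = emb 0 + emb 0 * t"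
      using arg_cong[OF zero, of "\<lambda>x. x $ i"] unfolding g d by (simp add: algebra_simps)
    then show ?thesis
      using emb_coords_unique[OF t] by blast
  qed
  then have "g1 *s u + d1 *s v = 0" "g2 *s u + d2 *s v = 0"
    by (simp_all add: vec_eq_iff)
  then have "g1 = 0 \<and> d1 = 0" "g2 = 0 \<and> d2 = 0"
    using indep unfolding lin_indep2_def by blast+
  then show "\<gamma> = 0 \<and> \<delta> = 0"
    using g d by simp
qed

lemma ext_line_span2_subset: "ext_line emb (span2 u v) \<subseteq> span2 (emb_vec u) (emb_vec v)"
proof
  fix z assume "z \<in> ext_line emb (span2 u v)"
  then obtain a b x y where z: "z = a *s emb_vec x + b *s emb_vec y"
    and "x \<in> span2 u v" "y \<in> span2 u v"
    unfolding ext_line_emb_vec by blast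
  moreover have "emb_vec w \<in> span2 (emb_vec u) (emb_vec v)" if w: "w \<in> span2 u v" for w
  proof -
    obtain a b where "w = a *s u + b *s v"
      using w by (auto simp: span2_def)
    then show ?thesis
      by (simp add: emb_vec_lincomb span2_memI)
  qed
  ultimately have "emb_vec x \<in> span2 (emb_vec u) (emb_vec v)" "emb_vec y \<in> span2 (emb_vec u) (emb_vec v)"
    by blast+
  then show "z \<in> span2 (emb_vec u) (emb_vec v)"
    unfolding z by (rule span2_closed)
qed

text \<open>The coordinates of a point of the chord, with respect to the two rational vectors spanning
  the extended line, are fixed by the Frobenius map, hence rational.\<close>
lemma chord_subset_span2:
  assumes t: "t \<notin> range emb" and indep: "lin_indep2 u v"
    and "Pt t \<in> ext_line emb (span2 u v)" "Pt (frob t) \<in> ext_line emb (span2 u v)"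
  shows "chord t \<subseteq> span2 u v"
proof
  have Pt_mem: "Pt t \<in> span2 (emb_vec u) (emb_vec v)" "Pt (frob t) \<in> span2 (emb_vec u) (emb_vec v)"
    using assms(3,4) ext_line_span2_subset by blast+
  fix x assume "x \<in> chord t"
  then obtain \<alpha> \<beta> where "emb_vec x = \<alpha> *s Pt t + \<beta> *s Pt (frob t)"
    by (auto simp: chord_def)
  then have "emb_vec x \<in> span2 (emb_vec u) (emb_vec v)"
    using Pt_mem by (simp add: span2_closed)
  then obtain \<gamma> \<delta> where x: "emb_vec x = \<gamma> *s emb_vec u + \<delta> *s emb_vec v"
    by (auto simp: span2_def)
  have "emb (x $ i) = frob \<gamma> * emb (u $ i) + frob \<delta> * emb (v $ i)" for i
    using arg_cong[OF x, of "\<lambda>y. frob (y $ i)"] by (simp add: frob_add frob_mult)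
  then have "(\<gamma> - frob \<gamma>) *s emb_vec u + (\<delta> - frob \<delta>) *s emb_vec v = 0"
    using x by (simp add: vec_eq_iff algebra_simps)
  then have "\<gamma> - frob \<gamma> = 0 \<and> \<delta> - frob \<delta> = 0"
    using lin_indep2_emb_vec[OF t indep] unfolding lin_indep2_def by blast
  then have "frob \<gamma> = \<gamma>" "frob \<delta> = \<delta>"
    by simp_all
  then obtain g d where "\<gamma> = emb g" "\<delta> = emb d"
    using frob_eq_self_iff by blast
  then have "emb_vec x = emb_vec (g *s u + d *s v)"
    unfolding x emb_vec_lincomb by simp
  then show "x \<in> span2 u v"
    by (simp add: span2_memI)
qed

lemma imaginary_chord_eq_chord:
  assumes "imaginary_chord emb L"
  shows "\<exists>t. t \<notin> range emb \<and> L = chord t"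
proof -
  obtain u v t where indep: "lin_indep2 u v" and L: "L = span2 u v" and t: "t \<notin> range emb"
    and "Pt t \<in> ext_line emb L" "Pt (frob t) \<in> ext_line emb L"
    using assms unfolding imaginary_chord_def is_line_def frob_eq_power by blast
  then have "chord t \<subseteq> L"
    using chord_subset_span2 by blast
  obtain u' v' where root: "t\<^sup>2 = emb u' * t + emb v'"
    using exists_quadratic[OF t] by blast
  have "chord t = L"
    using \<open>chord t \<subseteq> L\<close> span2_eq_if_indep[OF lin_indep2_chord_base] span2_base
    unfolding L chord_eq_span2[OF t root] by blast
  then show ?thesis
    using t by blast
qed

lemma chord_frob: "chord (frob t) = chord t"
proof -
  have "(\<exists>\<alpha> \<beta>. y = \<alpha> *s Pt (frob t) + \<beta> *s Pt t)
      \<longleftrightarrow> (\<exists>\<alpha> \<beta>. y = \<alpha> *s Pt t + \<beta> *s Pt (frob t))"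
    for y :: "'b^4"
    by (metis add.commute)
  then show ?thesis
    unfolding chord_def frob_frob by simp
qed

lemma chord_eq_chord_iff:
  assumes s: "s \<notin> range emb" and t: "t \<notin> range emb"
  shows "chord s = chord t \<longleftrightarrow> s = t \<or> s = frob t"
proof
  assume eq: "chord s = chord t"
  obtain u v where root: "s\<^sup>2 = emb u * s + emb v"
    using exists_quadratic[OF s] by blast
  have "chord_base1 u v \<in> chord t" "chord_base2 u v \<in> chord t"
    using eq span2_base unfolding chord_eq_span2[OF s root] by blast+
  then obtain a1 b1 a2 b2 where
    "emb_vec (chord_base1 u v) = a1 *s Pt t + b1 *s Pt (frob t)"
    "emb_vec (chord_base2 u v) = a2 *s Pt t + b2 *s Pt (frob t)"
    unfolding chord_def by blast
  then have "Pt s = (s * a1 + a2) *s Pt t + (s * b1 + b2) *s Pt (frob t)"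
    unfolding Pt_chord_base[OF root] by (simp add: vec_eq_iff algebra_simps)
  then have "Pt s \<in> span2 (Pt t) (Pt (frob t))"
    by (simp add: span2_memI)
  moreover have "t \<noteq> frob t"
    using frob_eq_self_iff t by metis
  ultimately show "s = t \<or> s = frob t"
    using Pt_not_in_span2[of t "frob t" s] by blast
next
  assume "s = t \<or> s = frob t"
  then show "chord s = chord t"
    using chord_frob by blast
qed

section \<open>The action of \<open>G\<^sub>q\<close>\<close>

definition moebius :: "'a \<Rightarrow> 'a \<Rightarrow> 'a \<Rightarrow> 'a \<Rightarrow> 'b \<Rightarrow> 'b" where
  "moebius a b c d z = (emb a * z + emb b) / (emb c * z + emb d)"

lemma moebius_denom_nonzero:
  assumes z: "z \<notin> range emb" and det: "a * d - b * c \<noteq> 0"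
  shows "emb c * z + emb d \<noteq> 0"
proof
  assume denom: "emb c * z + emb d = 0"
  show False
  proof (cases "c = 0")
    case True
    then show False
      using denom det by simp
  next
    case False
    then have "z = emb (- d / c)"
      using denom by (simp add: field_simps add_eq_0_iff)
    then show False
      using z by blast
  qed
qed

lemma moebius_not_in_range:
  assumes z: "z \<notin> range emb" and det: "a * d - b * c \<noteq> 0"
  shows "moebius a b c d z \<notin> range emb"
proof
  assume "moebius a b c d z \<in> range emb"
  then obtain k where "moebius a b c d z = emb k"
    by blast
  then have "emb b + emb a * z = emb k * emb d + emb k * emb c * z"
    using moebius_denom_nonzero[OF z det] by (simp add: moebius_def field_simps)
  then have "b = k * d \<and> a = k * c"
    using emb_coords_unique[OF z] by (metis emb_mult)
  then show False
    using det by (simp add: algebra_simps)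
qed

lemma frob_moebius: "frob (moebius a b c d z) = moebius a b c d (frob z)"
  by (simp add: moebius_def frob_divide frob_add frob_mult)

lemma emb_vec_mult_Mabcd:
  "emb_vec (x v* Mabcd a b c d) = emb_vec x v* Mabcd (emb a) (emb b) (emb c) (emb d)"
  unfolding vec4_eq_iff by (simp add: vector_matrix_mult_4 Mabcd_def)

lemma Pt_mult_emb_Mabcd:
  assumes "z \<notin> range emb" and "a * d - b * c \<noteq> 0"
  shows "Pt z v* Mabcd (emb a) (emb b) (emb c) (emb d) = (emb c * z + emb d)^3 *s Pt (moebius a b c d z)"
  unfolding moebius_def by (rule Pt_mult_Mabcd[OF moebius_denom_nonzero[OF assms]])

lemma emb_vec_mult_Mabcd_chord:
  assumes t: "t \<notin> range emb" and det: "a * d - b * c \<noteq> 0"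
    and x: "emb_vec x = \<alpha> *s Pt t + \<beta> *s Pt (frob t)"
  shows "emb_vec (x v* Mabcd a b c d)
    = (\<alpha> * (emb c * t + emb d)^3) *s Pt (moebius a b c d t)
      + (\<beta> * (emb c * frob t + emb d)^3) *s Pt (frob (moebius a b c d t))"
  unfolding emb_vec_mult_Mabcd x vector_matrix_left_distrib scalar_vector_matrix_assoc
    Pt_mult_emb_Mabcd[OF t det] Pt_mult_emb_Mabcd[OF frob_not_in_range[OF t] det] frob_moebius
  by (simp add: vector_smult_assoc)

lemma act_chord:
  assumes t: "t \<notin> range emb" and det: "a * d - b * c \<noteq> 0"
  shows "act_line (Mabcd a b c d) (chord t) = chord (moebius a b c d t)"
proof -
  let ?M = "Mabcd a b c d" and ?s = "moebius a b c d t"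
  have s: "?s \<notin> range emb"
    by (rule moebius_not_in_range[OF t det])
  have into: "x v* ?M \<in> chord ?s" if "x \<in> chord t" for x
    using that emb_vec_mult_Mabcd_chord[OF t det] unfolding chord_def by blast
  have kernel: "x = 0" if "x \<in> chord t" and "x v* ?M = 0" for x
  proof -
    obtain \<alpha> \<beta> where x: "emb_vec x = \<alpha> *s Pt t + \<beta> *s Pt (frob t)"
      using \<open>x \<in> chord t\<close> by (auto simp: chord_def)
    have "?s \<noteq> frob ?s"
      using frob_eq_self_iff s by metis
    moreover have "(\<alpha> * (emb c * t + emb d)^3) *s Pt ?s
        + (\<beta> * (emb c * frob t + emb d)^3) *s Pt (frob ?s) = 0"
      using emb_vec_mult_Mabcd_chord[OF t det x] \<open>x v* ?M = 0\<close> by (simp add: vec_eq_iff)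
    ultimately have "\<alpha> * (emb c * t + emb d)^3 = 0 \<and> \<beta> * (emb c * frob t + emb d)^3 = 0"
      using lin_indep2_Pt unfolding lin_indep2_def by blast
    then have "\<alpha> = 0" "\<beta> = 0"
      using moebius_denom_nonzero[OF t det] moebius_denom_nonzero[OF frob_not_in_range[OF t] det]
      by simp_all
    then show "x = 0"
      using x by simp
  qed
  obtain u v where root: "t\<^sup>2 = emb u * t + emb v"
    using exists_quadratic[OF t] by blast
  obtain u' v' where root': "?s\<^sup>2 = emb u' * ?s + emb v'"
    using exists_quadratic[OF s] by blast
  let ?X = "chord_base1 u v" and ?Y = "chord_base2 u v"
  have "?X v* ?M \<in> chord ?s" "?Y v* ?M \<in> chord ?s"
    using into span2_base unfolding chord_eq_span2[OF t root] by blast+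
  moreover have "lin_indep2 (?X v* ?M) (?Y v* ?M)"
    using lin_indep2_chord_base kernel unfolding chord_eq_span2[OF t root] by (rule lin_indep2_image)
  ultimately show ?thesis
    unfolding chord_eq_span2[OF t root] act_line_span2 chord_eq_span2[OF s root']
    by (rule span2_eq_if_indep[rotated])
qed

lemma scale_mem_chord:
  assumes "x \<in> chord t"
  shows "m *s x \<in> chord t"
proof -
  obtain \<alpha> \<beta> where "emb_vec x = \<alpha> *s Pt t + \<beta> *s Pt (frob t)"
    using assms by (auto simp: chord_def)
  then have "emb_vec (m *s x) = (emb m * \<alpha>) *s Pt t + (emb m * \<beta>) *s Pt (frob t)"
    by (simp add: emb_vec_scale vector_smult_assoc vector_add_ldistrib)
  then show ?thesis
    by (auto simp: chord_def)
qed

lemma scale_chord: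
  assumes "m \<noteq> 0"
  shows "(\<lambda>x. m *s x) ` chord t = chord t"
proof
  show "(\<lambda>x. m *s x) ` chord t \<subseteq> chord t"
    by (auto intro: scale_mem_chord)
  show "chord t \<subseteq> (\<lambda>x. m *s x) ` chord t"
  proof
    fix x assume "x \<in> chord t"
    moreover have "x = m *s ((1 / m) *s x)"
      using assms by (simp add: vector_smult_assoc)
    ultimately show "x \<in> (\<lambda>x. m *s x) ` chord t"
      by (blast intro: scale_mem_chord)
  qed
qed

lemma act_chord_proj_class:
  assumes t: "t \<notin> range emb" and det: "a * d - b * c \<noteq> 0"
    and M: "M \<in> proj_class (Mabcd a b c d)"
  shows "act_line M (chord t) = chord (moebius a b c d t)"
proof -
  obtain m where "m \<noteq> 0" and M: "M = smat m (Mabcd a b c d)"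
    using M unfolding proj_class_def by blast
  have "act_line M (chord t) = (\<lambda>x. m *s x) ` act_line (Mabcd a b c d) (chord t)"
    unfolding M act_line_def by (auto simp: vector_matrix_mult_smat image_image)
  then show ?thesis
    using act_chord[OF t det] scale_chord[OF \<open>m \<noteq> 0\<close>] by simp
qed

lemma orbit_chord:
  assumes t: "t \<notin> range emb"
  shows "orbit (chord t) = {L. imaginary_chord emb L}"
proof
  show "orbit (chord t) \<subseteq> {L. imaginary_chord emb L}"
  proof
    fix L assume "L \<in> orbit (chord t)"
    then obtain a b c d M where det: "a * d - b * c \<noteq> 0"
      and M: "M \<in> proj_class (Mabcd a b c d)" and L: "L = act_line M (chord t)"
      unfolding orbit_def Gq_def by blast
    then show "L \<in> {L. imaginary_chord emb L}"
      using act_chord_proj_class[OF t det M] imaginary_chord_chord moebius_not_in_range[OF t det] by simp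
  qed
  show "{L. imaginary_chord emb L} \<subseteq> orbit (chord t)"
  proof
    fix L assume "L \<in> {L. imaginary_chord emb L}"
    then obtain s where s: "s \<notin> range emb" and L: "L = chord s"
      using imaginary_chord_eq_chord by blast
    obtain a b where st: "s = emb a + emb b * t"
      using emb_coords_exist[OF t] by blast
    then have "b \<noteq> 0"
      using s by auto
    then have det: "b * 1 - a * 0 \<noteq> 0"
      by simp
    have "moebius b a 0 1 t = s"
      unfolding moebius_def st by (simp add: algebra_simps)
    then have "act_line (Mabcd b a 0 1) (chord t) = L"
      using act_chord[OF t det] L by simp
    moreover have "proj_class (Mabcd b a 0 1) \<in> Gq"
      using det unfolding Gq_def by blast
    ultimately show "L \<in> orbit (chord t)"
      unfolding orbit_def using proj_class_refl by blast
  qed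
qed

end

section \<open>The stabiliser of an imaginary chord\<close>

text \<open>For \<open>t\<^sup>2 = u t + v\<close>, the matrices of the projectivities whose Moebius map fixes \<open>t\<close>,
  respectively sends \<open>t\<close> to its conjugate \<open>u - t\<close>.\<close>
definition M_fix :: "'a::field \<Rightarrow> 'a \<Rightarrow> 'a \<Rightarrow> 'a \<Rightarrow> 'a^4^4" where
  "M_fix u v c d = Mabcd (d + c * u) (c * v) c d"

definition M_swap :: "'a::field \<Rightarrow> 'a \<Rightarrow> 'a \<Rightarrow> 'a \<Rightarrow> 'a^4^4" where
  "M_swap u v c d = Mabcd (- d) (d * u - c * v) c d"

lemma M_fix_scale: "M_fix u v (l * c) (l * d) = smat (l^3) (M_fix u v c d)"
  unfolding M_fix_def Mabcd_scale[symmetric] by (simp add: algebra_simps)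

lemma M_swap_scale: "M_swap u v (l * c) (l * d) = smat (l^3) (M_swap u v c d)"
  unfolding M_swap_def Mabcd_scale[symmetric] by (simp add: algebra_simps)

definition proj_line_reps :: "('a::field \<times> 'a) set" where
  "proj_line_reps = insert (0, 1) ((\<lambda>d. (1, d)) ` UNIV)"

lemma card_proj_line_reps: "card (proj_line_reps :: ('a::{finite,field} \<times> 'a) set) = CARD('a) + 1"
proof -
  have "(0, 1) \<notin> range (\<lambda>d::'a. (1::'a, d))" "card (range (\<lambda>d::'a. (1::'a, d))) = CARD('a)"
    by (auto simp: card_image inj_on_def)
  then show ?thesis
    unfolding proj_line_reps_def by simp
qed

lemma proj_line_reps_nonzero: "r \<in> proj_line_reps \<Longrightarrow> fst r \<noteq> 0 \<or> snd r \<noteq> 0"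
  unfolding proj_line_reps_def by auto

lemma proj_line_reps_exist:
  assumes "c \<noteq> 0 \<or> (d::'a::field) \<noteq> 0"
  shows "\<exists>l r. l \<noteq> 0 \<and> r \<in> proj_line_reps \<and> c = l * fst r \<and> d = l * snd r"
proof (cases "c = 0")
  case True
  then show ?thesis
    using assms by (intro exI[of _ d] exI[of _ "(0, 1)"]) (auto simp: proj_line_reps_def)
next
  case False
  then show ?thesis
    by (intro exI[of _ c] exI[of _ "(1, d / c)"]) (auto simp: proj_line_reps_def)
qed

lemma inj_on_proj_class_Mabcd_reps:
  fixes f g :: "'a::field \<Rightarrow> 'a \<Rightarrow> 'a"
  assumes "\<And>d d'. f 1 d = f 1 d' \<Longrightarrow> d = d'"
  shows "inj_on (\<lambda>r. proj_class (Mabcd (f (fst r) (snd r)) (g (fst r) (snd r)) (fst r) (snd r)))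
    proj_line_reps"
proof (rule inj_onI)
  fix r r' assume r: "r \<in> proj_line_reps" "r' \<in> proj_line_reps" and
    "proj_class (Mabcd (f (fst r) (snd r)) (g (fst r) (snd r)) (fst r) (snd r))
      = proj_class (Mabcd (f (fst r') (snd r')) (g (fst r') (snd r')) (fst r') (snd r'))"
  then obtain m where "m \<noteq> 0" and eq:
    "Mabcd (f (fst r) (snd r)) (g (fst r) (snd r)) (fst r) (snd r)
      = smat m (Mabcd (f (fst r') (snd r')) (g (fst r') (snd r')) (fst r') (snd r'))"
    using proj_class_eqD by blast
  from arg_cong[OF eq, of "\<lambda>M. M $ 0 $ 3"] arg_cong[OF eq, of "\<lambda>M. M $ 0 $ 2"]
  have "fst r ^ 3 = m * fst r' ^ 3"
    "f (fst r) (snd r) * (fst r)\<^sup>2 = m * (f (fst r') (snd r') * (fst r')\<^sup>2)"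
    by (simp_all add: Mabcd_def)
  then show "r = r'"
    using r \<open>m \<noteq> 0\<close> assms unfolding proj_line_reps_def by auto
qed

lemma inj_on_M_fix_reps: "inj_on (\<lambda>r. proj_class (M_fix u v (fst r) (snd r))) proj_line_reps"
  unfolding M_fix_def by (rule inj_on_proj_class_Mabcd_reps) simp

lemma inj_on_M_swap_reps: "inj_on (\<lambda>r. proj_class (M_swap u v (fst r) (snd r))) proj_line_reps"
  unfolding M_swap_def by (rule inj_on_proj_class_Mabcd_reps) simp

context quadratic_extension
begin

lemma emb_Mabcd_smat:
  assumes "Mabcd a b c d = smat m (Mabcd a' b' c' d')"
  shows "Mabcd (emb a) (emb b) (emb c) (emb d) = smat (emb m) (Mabcd (emb a') (emb b') (emb c') (emb d'))"
proof -
  have emb_nth: "Mabcd (emb a) (emb b) (emb c) (emb d) $ i $ j = emb (Mabcd a b c d $ i $ j)"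
    for a b c d and i j :: 4
    using four_cases[of i] four_cases[of j] by (auto simp: Mabcd_def)
  show ?thesis
    using assms by (simp add: vec_eq_iff emb_nth)
qed

lemma moebius_eq_if_smat:
  assumes z: "z \<notin> range emb" and det: "a * d - b * c \<noteq> 0" and det': "a' * d' - b' * c' \<noteq> 0"
    and eq: "Mabcd a b c d = smat m (Mabcd a' b' c' d')"
  shows "moebius a b c d z = moebius a' b' c' d' z"
proof -
  define k where "k = (emb c * z + emb d)^3"
  define k' where "k' = emb m * (emb c' * z + emb d')^3"
  have "k *s Pt (moebius a b c d z) = k' *s Pt (moebius a' b' c' d' z)"
    using arg_cong[OF emb_Mabcd_smat[OF eq], of "\<lambda>M. Pt z v* M"]
    unfolding vector_matrix_mult_smat Pt_mult_emb_Mabcd[OF z det] Pt_mult_emb_Mabcd[OF z det']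
    by (simp add: k_def k'_def vector_smult_assoc)
  from arg_cong[OF this, of "\<lambda>x. x $ 3"] arg_cong[OF this, of "\<lambda>x. x $ 2"]
  have "k = k'" "k * moebius a b c d z = k' * moebius a' b' c' d' z"
    by (simp_all add: Pt_def)
  moreover have "k \<noteq> 0"
    using moebius_denom_nonzero[OF z det] by (simp add: k_def)
  ultimately show ?thesis
    by simp
qed

lemma moebius_eq_self_iff:
  assumes t: "t \<notin> range emb" and root: "t\<^sup>2 = emb u * t + emb v" and det: "a * d - b * c \<noteq> 0"
  shows "moebius a b c d t = t \<longleftrightarrow> a = d + c * u \<and> b = c * v"
proof -
  have "moebius a b c d t = t \<longleftrightarrow> emb b + emb a * t = t * (emb c * t + emb d)"
    using moebius_denom_nonzero[OF t det] by (auto simp: moebius_def field_simps)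
  also have "t * (emb c * t + emb d) = emb c * t\<^sup>2 + emb d * t"
    by (simp add: algebra_simps power2_eq_square)
  also have "\<dots> = emb (c * v) + emb (d + c * u) * t"
    unfolding root by (simp add: algebra_simps)
  finally show ?thesis
    using emb_coords_unique[OF t] by blast
qed

lemma moebius_eq_frob_iff:
  assumes t: "t \<notin> range emb" and root: "t\<^sup>2 = emb u * t + emb v" and det: "a * d - b * c \<noteq> 0"
  shows "moebius a b c d t = frob t \<longleftrightarrow> a = - d \<and> b = d * u - c * v"
proof -
  have "moebius a b c d t = frob t \<longleftrightarrow> emb b + emb a * t = frob t * (emb c * t + emb d)"
    using moebius_denom_nonzero[OF t det] by (auto simp: moebius_def field_simps)
  also have "frob t * (emb c * t + emb d) = emb u * emb c * t + emb u * emb d - emb c * t\<^sup>2 - emb d * t"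
    by (simp add: frob_eq_trace_minus[OF t root] algebra_simps power2_eq_square)
  also have "\<dots> = emb (d * u - c * v) + emb (- d) * t"
    unfolding root by (simp add: algebra_simps)
  finally show ?thesis
    using emb_coords_unique[OF t] by blast
qed

lemma det_M_fix_nonzero:
  assumes t: "t \<notin> range emb" and root: "t\<^sup>2 = emb u * t + emb v" and "c \<noteq> 0 \<or> d \<noteq> 0"
  shows "(d + c * u) * d - (c * v) * c \<noteq> 0"
  using quadratic_form_nonzero[of u v c d] no_root_in_base[OF t root] assms(3)
  by (simp add: algebra_simps)

lemma det_M_swap_nonzero:
  assumes t: "t \<notin> range emb" and root: "t\<^sup>2 = emb u * t + emb v" and "c \<noteq> 0 \<or> d \<noteq> 0"
  shows "(- d) * d - (d * u - c * v) * c \<noteq> 0"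
  using quadratic_form_nonzero[of u v c d] no_root_in_base[OF t root] assms(3)
  by (simp add: algebra_simps)

lemma M_fix_in_stabiliser:
  assumes t: "t \<notin> range emb" and root: "t\<^sup>2 = emb u * t + emb v" and "c \<noteq> 0 \<or> d \<noteq> 0"
  shows "proj_class (M_fix u v c d) \<in> stabiliser (chord t)"
proof -
  note det = det_M_fix_nonzero[OF assms]
  have "act_line M (chord t) = chord t" if "M \<in> proj_class (M_fix u v c d)" for M
    using act_chord_proj_class[OF t det] that moebius_eq_self_iff[OF t root det] by (simp add: M_fix_def)
  then show ?thesis
    unfolding stabiliser_def Gq_def M_fix_def using det by blast
qed

lemma M_swap_in_stabiliser:
  assumes t: "t \<notin> range emb" and root: "t\<^sup>2 = emb u * t + emb v" and "c \<noteq> 0 \<or> d \<noteq> 0"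
  shows "proj_class (M_swap u v c d) \<in> stabiliser (chord t)"
proof -
  note det = det_M_swap_nonzero[OF assms]
  have "act_line M (chord t) = chord t" if "M \<in> proj_class (M_swap u v c d)" for M
    using act_chord_proj_class[OF t det] that moebius_eq_frob_iff[OF t root det]
    by (simp add: M_swap_def chord_frob)
  then show ?thesis
    unfolding stabiliser_def Gq_def M_swap_def using det by blast
qed

lemma stabiliser_chord_cases:
  assumes t: "t \<notin> range emb" and root: "t\<^sup>2 = emb u * t + emb v"
    and g: "g \<in> stabiliser (chord t)"
  obtains c d where "c \<noteq> 0 \<or> d \<noteq> 0"
    and "g = proj_class (M_fix u v c d) \<or> g = proj_class (M_swap u v c d)"
proof -
  obtain a b c d where det: "a * d - b * c \<noteq> 0" and g_eq: "g = proj_class (Mabcd a b c d)"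
    using g unfolding stabiliser_def Gq_def by blast
  then have "c \<noteq> 0 \<or> d \<noteq> 0"
    by auto
  have "act_line (Mabcd a b c d) (chord t) = chord t"
    using g proj_class_refl unfolding stabiliser_def g_eq by blast
  then have "chord (moebius a b c d t) = chord t"
    using act_chord[OF t det] by simp
  then have "moebius a b c d t = t \<or> moebius a b c d t = frob t"
    using chord_eq_chord_iff[OF moebius_not_in_range[OF t det] t] by blast
  then show ?thesis
  proof
    assume "moebius a b c d t = t"
    then have "g = proj_class (M_fix u v c d)"
      using moebius_eq_self_iff[OF t root det] by (simp add: g_eq M_fix_def)
    then show ?thesis
      using that \<open>c \<noteq> 0 \<or> d \<noteq> 0\<close> by blast
  next
    assume "moebius a b c d t = frob t"
    then have "g = proj_class (M_swap u v c d)"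
      using moebius_eq_frob_iff[OF t root det] by (simp add: g_eq M_swap_def)
    then show ?thesis
      using that \<open>c \<noteq> 0 \<or> d \<noteq> 0\<close> by blast
  qed
qed

lemma proj_class_M_fix_neq_M_swap:
  assumes t: "t \<notin> range emb" and root: "t\<^sup>2 = emb u * t + emb v"
    and "c \<noteq> 0 \<or> d \<noteq> 0" and "c' \<noteq> 0 \<or> d' \<noteq> 0"
  shows "proj_class (M_fix u v c d) \<noteq> proj_class (M_swap u v c' d')"
proof
  assume "proj_class (M_fix u v c d) = proj_class (M_swap u v c' d')"
  then obtain m where "M_fix u v c d = smat m (M_swap u v c' d')"
    using proj_class_eqD by blast
  note det = det_M_fix_nonzero[OF t root assms(3)] and det' = det_M_swap_nonzero[OF t root assms(4)]
  have "t = frob t"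
    using moebius_eq_if_smat[OF t det det'] \<open>M_fix u v c d = smat m (M_swap u v c' d')\<close>
      moebius_eq_self_iff[OF t root det] moebius_eq_frob_iff[OF t root det']
    by (simp add: M_fix_def M_swap_def)
  then show False
    using frob_eq_self_iff t by metis
qed

lemma card_stabiliser_chord:
  assumes t: "t \<notin> range emb"
  shows "card (stabiliser (chord t)) = 2 * (CARD('a) + 1)"
proof -
  obtain u v where root: "t\<^sup>2 = emb u * t + emb v"
    using exists_quadratic[OF t] by blast
  let ?fix = "\<lambda>r. proj_class (M_fix u v (fst r) (snd r))"
  let ?swap = "\<lambda>r. proj_class (M_swap u v (fst r) (snd r))"
  have "stabiliser (chord t) = ?fix ` proj_line_reps \<union> ?swap ` proj_line_reps"
  proof
    show "stabiliser (chord t) \<subseteq> ?fix ` proj_line_reps \<union> ?swap ` proj_line_reps"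
    proof
      fix g assume "g \<in> stabiliser (chord t)"
      then obtain c d where cd: "c \<noteq> 0 \<or> d \<noteq> 0"
        and g: "g = proj_class (M_fix u v c d) \<or> g = proj_class (M_swap u v c d)"
        using stabiliser_chord_cases[OF t root] by metis
      obtain l r where "l \<noteq> 0" "r \<in> proj_line_reps" "c = l * fst r" "d = l * snd r"
        using proj_line_reps_exist[OF cd] by blast
      then show "g \<in> ?fix ` proj_line_reps \<union> ?swap ` proj_line_reps"
        using g by (auto simp: M_fix_scale M_swap_scale proj_class_smat)
    qed
    show "?fix ` proj_line_reps \<union> ?swap ` proj_line_reps \<subseteq> stabiliser (chord t)"
      using M_fix_in_stabiliser[OF t root] M_swap_in_stabiliser[OF t root] proj_line_reps_nonzero
      by blast
  qed
  moreover have "?fix r \<noteq> ?swap r'" if "r \<in> proj_line_reps" "r' \<in> proj_line_reps" for r r'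
    using proj_class_M_fix_neq_M_swap[OF t root] proj_line_reps_nonzero[OF that(1)]
      proj_line_reps_nonzero[OF that(2)] by blast
  then have "?fix ` proj_line_reps \<inter> ?swap ` proj_line_reps = {}"
    by blast
  ultimately have "card (stabiliser (chord t)) = card (?fix ` proj_line_reps) + card (?swap ` proj_line_reps)"
    by (simp add: card_Un_disjoint)
  also have "\<dots> = 2 * (CARD('a) + 1)"
    using card_image[OF inj_on_M_fix_reps[of u v]] card_image[OF inj_on_M_swap_reps[of u v]]
      card_proj_line_reps[where 'a = 'a] by simp
  finally show ?thesis .
qed

end

section \<open>The two special chords\<close>

lemma M_odd_eq_Mabcd:
  "M_odd \<rho> 1 b d = Mabcd d b (\<rho> * b) d"
  "M_odd \<rho> (- 1) b d = Mabcd (- d) b (- (\<rho> * b)) d"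
  unfolding mat4_eq_iff by (simp_all add: M_odd_def Mabcd_def power2_eq_square power3_eq_cube algebra_simps)

lemma M_even_eq_Mabcd:
  fixes \<eta> \<alpha> c d :: "'a::field"
  assumes two: "(2::'a) = 0"
  shows "M_even \<eta> \<alpha> c d = Mabcd (\<alpha> * c + d) (\<eta> * c + (\<alpha> + 1) * d) c d"
proof -
  have "(3::'a) = 2 + 1"
    by simp
  then have "(3::'a) = 1"
    using two by simp
  then show ?thesis
    unfolding mat4_eq_iff using two by (simp add: M_even_def Mabcd_def Let_def)
qed

context quadratic_extension
begin

lemma nonsquare_line_eq_chord:
  assumes nonsquare: "\<nexists>x. x\<^sup>2 = \<rho>"
  obtains t where "t \<notin> range emb" "t\<^sup>2 = emb 0 * t + emb (1 / \<rho>)"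
    and "span2 (vec4 1 0 \<rho> 0) (vec4 0 1 0 \<rho>) = chord t"
proof -
  have "\<rho> \<noteq> 0"
    using nonsquare by force
  have irreducible: "\<forall>x. x\<^sup>2 \<noteq> 0 * x + 1 / \<rho>"
  proof (intro allI notI)
    fix x assume "x\<^sup>2 = 0 * x + 1 / \<rho>"
    then have "(1 / x)\<^sup>2 = \<rho>"
      by (simp add: power_one_over)
    then show False
      using nonsquare by blast
  qed
  then obtain t where root: "t\<^sup>2 = emb 0 * t + emb (1 / \<rho>)"
    using irreducible_quadratic_has_root by blast
  have t: "t \<notin> range emb"
    by (rule root_not_in_range[OF irreducible root])
  have "vec4 1 0 \<rho> 0 = \<rho> *s chord_base1 0 (1 / \<rho>) + 0 *s chord_base2 0 (1 / \<rho>)"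
    "vec4 0 1 0 \<rho> = 0 *s chord_base1 0 (1 / \<rho>) + \<rho> *s chord_base2 0 (1 / \<rho>)"
    using \<open>\<rho> \<noteq> 0\<close> by (simp_all add: vec4_eq_iff chord_base1_def chord_base2_def)
  then have "vec4 1 0 \<rho> 0 \<in> chord t" "vec4 0 1 0 \<rho> \<in> chord t"
    unfolding chord_eq_span2[OF t root] by (metis span2_memI)+
  moreover have "lin_indep2 (vec4 1 0 \<rho> 0) (vec4 0 1 0 \<rho>)"
    unfolding lin_indep2_def by (simp add: vec4_eq_iff)
  ultimately have "span2 (vec4 1 0 \<rho> 0) (vec4 0 1 0 \<rho>) = chord t"
    unfolding chord_eq_span2[OF t root] by (intro span2_eq_if_indep)
  then show ?thesis
    using that t root by blast
qed

lemma nonsquare_line: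
  assumes "\<nexists>x. x\<^sup>2 = \<rho>"
  shows "imaginary_chord emb (span2 (vec4 1 0 \<rho> 0) (vec4 0 1 0 \<rho>))
    \<and> (\<forall>g \<in> stabiliser (span2 (vec4 1 0 \<rho> 0) (vec4 0 1 0 \<rho>)).
         \<exists>\<alpha> b d. (\<alpha> = -1 \<or> \<alpha> = 1) \<and> (b \<noteq> 0 \<or> d \<noteq> 0) \<and> M_odd \<rho> \<alpha> b d \<in> g)"
proof -
  obtain t where t: "t \<notin> range emb" and root: "t\<^sup>2 = emb 0 * t + emb (1 / \<rho>)"
    and line: "span2 (vec4 1 0 \<rho> 0) (vec4 0 1 0 \<rho>) = chord t"
    by (rule nonsquare_line_eq_chord[OF assms])
  have "\<rho> \<noteq> 0"
    using assms by force
  have "\<exists>\<alpha> b d. (\<alpha> = -1 \<or> \<alpha> = 1) \<and> (b \<noteq> 0 \<or> d \<noteq> 0) \<and> M_odd \<rho> \<alpha> b d \<in> g"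
    if g_stab: "g \<in> stabiliser (chord t)" for g
  proof -
    obtain c d where cd: "c \<noteq> 0 \<or> d \<noteq> 0"
      and g: "g = proj_class (M_fix 0 (1 / \<rho>) c d) \<or> g = proj_class (M_swap 0 (1 / \<rho>) c d)"
      using stabiliser_chord_cases[OF t root g_stab] by blast
    have "M_fix 0 (1 / \<rho>) c d = M_odd \<rho> 1 (c / \<rho>) d"
      "M_swap 0 (1 / \<rho>) c d = M_odd \<rho> (- 1) (- (c / \<rho>)) d"
      using \<open>\<rho> \<noteq> 0\<close> by (simp_all add: M_odd_eq_Mabcd M_fix_def M_swap_def)
    moreover have "c / \<rho> \<noteq> 0 \<or> d \<noteq> 0" "- (c / \<rho>) \<noteq> 0 \<or> d \<noteq> 0"
      using cd \<open>\<rho> \<noteq> 0\<close> by simp_all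
    ultimately show ?thesis
      using g proj_class_refl[of "M_fix 0 (1 / \<rho>) c d"] proj_class_refl[of "M_swap 0 (1 / \<rho>) c d"]
      by (metis (no_types))
  qed
  then show ?thesis
    using imaginary_chord_chord[OF t] unfolding line by blast
qed

lemma trace_one_line:
  assumes q: "CARD('a) = 2 ^ h" and trace: "abs_trace h \<eta> = 1"
  shows "imaginary_chord emb (span2 (vec4 (\<eta> + 1) 1 1 0) (vec4 \<eta> \<eta> 0 1))
    \<and> (\<forall>g \<in> stabiliser (span2 (vec4 (\<eta> + 1) 1 1 0) (vec4 \<eta> \<eta> 0 1)).
         \<exists>\<alpha> c d. (\<alpha> = 0 \<or> \<alpha> = 1) \<and> (c \<noteq> 0 \<or> d \<noteq> 0) \<and> M_even \<eta> \<alpha> c d \<in> g)"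
proof -
  have two: "(2::'a) = 0"
    by (rule two_eq_zero_if_card_power2[OF q])
  note irreducible = abs_trace_one_irreducible[OF q trace]
  obtain t where root: "t\<^sup>2 = emb 1 * t + emb \<eta>"
    using irreducible_quadratic_has_root[OF irreducible] by blast
  have t: "t \<notin> range emb"
    by (rule root_not_in_range[OF irreducible root])
  have line: "span2 (vec4 (\<eta> + 1) 1 1 0) (vec4 \<eta> \<eta> 0 1) = chord t"
    unfolding chord_eq_span2[OF t root] chord_base1_def chord_base2_def by (simp add: add.commute)
  have M_fix_even: "M_fix 1 \<eta> c d = M_even \<eta> 1 c d" for c d
    using two by (simp add: M_even_eq_Mabcd M_fix_def algebra_simps flip: mult_2)
  have M_swap_even: "M_swap 1 \<eta> c d = M_even \<eta> 0 c d" for c d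
    by (simp add: M_even_eq_Mabcd[OF two] M_swap_def char2_minus[OF two] char2_diff[OF two] ac_simps)
  have "\<exists>\<alpha> c d. (\<alpha> = 0 \<or> \<alpha> = 1) \<and> (c \<noteq> 0 \<or> d \<noteq> 0) \<and> M_even \<eta> \<alpha> c d \<in> g"
    if g_stab: "g \<in> stabiliser (chord t)" for g
  proof -
    obtain c d where "c \<noteq> 0 \<or> d \<noteq> 0"
      and "g = proj_class (M_even \<eta> 1 c d) \<or> g = proj_class (M_even \<eta> 0 c d)"
      using stabiliser_chord_cases[OF t root g_stab] M_fix_even M_swap_even by metis
    then show ?thesis
      using proj_class_refl[of "M_even \<eta> 1 c d"] proj_class_refl[of "M_even \<eta> 0 c d"] by blast
  qed
  then show ?thesis
    using imaginary_chord_chord[OF t] unfolding line by blast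
qed

end

theorem theorem5p7:
  fixes emb :: "'a::{finite,field} \<Rightarrow> 'b::{finite,field}"
  assumes q5: "CARD('a) \<ge> 5"
    and ext_card: "CARD('b) = CARD('a) ^ 2"
    and emb_inj: "inj emb"
    and emb_add: "\<And>x y. emb (x + y) = emb x + emb y"
    and emb_mult: "\<And>x y. emb (x * y) = emb x * emb y"
    and emb_one: "emb 1 = 1"
  shows
    "{L. imaginary_chord emb L} \<noteq> {}
     \<and> (\<forall>L. imaginary_chord emb L \<longrightarrow>
           orbit L = {L'. imaginary_chord emb L'}
         \<and> card (stabiliser L) = 2 * (CARD('a) + 1))
     \<and> (odd CARD('a) \<longrightarrow> (\<forall>\<rho>::'a. (\<nexists>x. x ^ 2 = \<rho>) \<longrightarrow>
          imaginary_chord emb (span2 (vec4 1 0 \<rho> 0) (vec4 0 1 0 \<rho>))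
        \<and> (\<forall>g \<in> stabiliser (span2 (vec4 1 0 \<rho> 0) (vec4 0 1 0 \<rho>)).
             \<exists>\<alpha> b d. (\<alpha> = -1 \<or> \<alpha> = 1) \<and> (b \<noteq> 0 \<or> d \<noteq> 0) \<and> M_odd \<rho> \<alpha> b d \<in> g)))
     \<and> (even CARD('a) \<longrightarrow> (\<forall>h (\<eta>::'a). CARD('a) = 2 ^ h \<longrightarrow> abs_trace h \<eta> = 1 \<longrightarrow>
          imaginary_chord emb (span2 (vec4 (\<eta>+1) 1 1 0) (vec4 \<eta> \<eta> 0 1))
        \<and> (\<forall>g \<in> stabiliser (span2 (vec4 (\<eta>+1) 1 1 0) (vec4 \<eta> \<eta> 0 1)).
             \<exists>\<alpha> c d. (\<alpha> = 0 \<or> \<alpha> = 1) \<and> (c \<noteq> 0 \<or> d \<noteq> 0) \<and> M_even \<eta> \<alpha> c d \<in> g)))"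
proof -
  interpret quadratic_extension emb
    by unfold_locales (use ext_card emb_inj emb_add emb_mult emb_one in auto)
  have "{L. imaginary_chord emb L} \<noteq> {}"
    using exists_not_in_range_emb imaginary_chord_chord by blast
  moreover have "orbit L = {L'. imaginary_chord emb L'} \<and> card (stabiliser L) = 2 * (CARD('a) + 1)"
    if "imaginary_chord emb L" for L
    using imaginary_chord_eq_chord[OF that] orbit_chord card_stabiliser_chord by blast
  ultimately show ?thesis
    using nonsquare_line trace_one_line by blast
qed

end
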